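(* Let $G=(V,E)$ be an undirected graph on $n$ nodes with maximum degree $\Delta \le n-1$, and let $p\in(0,1]$, $\lambda>0$. Suppose traces are generated independently by the cascade process on $G$ with parameters $p,\lambda$, each with a source chosen uniformly at random from $V$. Then with $\Theta\left(\frac{n\Delta}{p}\log n\right)$ traces, the First-Edge algorithm returns exactly the edge set $E$ with probability at least $1-\frac{1}{\mathrm{poly}(n)}$.
   Context: Cascade process with parameters $p,\lambda$ from source $s$: independently for every edge of $G$, the edge is deleted with probability $1-p$ and otherwise receives a length drawn from the exponential distribution $\mathrm{Exp}(\lambda)$ (rate $\lambda$). The infection time $t(v)$ of a node $v$ is its shortest-path distance from $s$ in the subgraph of retained edges with these lengths ($t(s)=0$; $t(v)=\infty$ if unreachable). A trace is the sequence of pairs $(v,t(v))$ for all nodes with finite $t(v)$, listed in increasing order of $t(v)$. The First-Edge algorithm: for every input trace containing at least two nodes, add to the output edge set the edge joining the first two nodes of the trace, ignoring the rest of the trace; output the resulting set of edges. *)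

theory Defs
  imports "HOL-Probability.Probability"
begin

definition simple_graph :: "nat set \<Rightarrow> nat set set \<Rightarrow> bool" where
  "simple_graph V E \<longleftrightarrow> finite V \<and> E \<subseteq> {{u, v} | u v. u \<in> V \<and> v \<in> V \<and> u \<noteq> v}"

definition degree :: "nat set set \<Rightarrow> nat \<Rightarrow> nat" where
  "degree E v = card {e \<in> E. v \<in> e}"

definition max_degree :: "nat set \<Rightarrow> nat set set \<Rightarrow> nat" where
  "max_degree V E = Max (degree E ` V)"

(* Randomness attached to an edge e: fst = edge retained (prob. p), snd = its length (Exp(lambda)).
   An edge is deleted iff fst is False; then its length is irrelevant. *)
type_synonym edge_sample = "nat set \<Rightarrow> bool \<times> real"

definition edge_measure :: "real \<Rightarrow> real \<Rightarrow> (bool \<times> real) measure" where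
  "edge_measure p l = measure_pmf (bernoulli_pmf p) \<Otimes>\<^sub>M density lborel (\<lambda>x. ennreal (exponential_density l x))"

definition cascade_measure :: "nat set \<Rightarrow> nat set set \<Rightarrow> real \<Rightarrow> real \<Rightarrow> (nat \<times> edge_sample) measure" where
  "cascade_measure V E p l = measure_pmf (pmf_of_set V) \<Otimes>\<^sub>M (\<Pi>\<^sub>M e\<in>E. edge_measure p l)"

definition cascades_measure :: "nat \<Rightarrow> nat set \<Rightarrow> nat set set \<Rightarrow> real \<Rightarrow> real \<Rightarrow> (nat \<Rightarrow> nat \<times> edge_sample) measure" where
  "cascades_measure N V E p l = (\<Pi>\<^sub>M i\<in>{..<N}. cascade_measure V E p l)"

definition retained_walks :: "nat set set \<Rightarrow> edge_sample \<Rightarrow> nat \<Rightarrow> nat \<Rightarrow> nat list set" where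
  "retained_walks E \<omega> s v = {xs. xs \<noteq> [] \<and> hd xs = s \<and> last xs = v \<and>
      (\<forall>i < length xs - 1. {xs ! i, xs ! Suc i} \<in> E \<and> fst (\<omega> {xs ! i, xs ! Suc i}))}"

(* infection time = shortest-path distance from s (infinite if unreachable) *)
definition infection_time :: "nat set set \<Rightarrow> edge_sample \<Rightarrow> nat \<Rightarrow> nat \<Rightarrow> ennreal" where
  "infection_time E \<omega> s v = (INF xs \<in> retained_walks E \<omega> s v.
      \<Sum>i < length xs - 1. ennreal (snd (\<omega> {xs ! i, xs ! Suc i})))"

(* the trace: infected nodes with their times, in increasing order of time
   (ties, which have probability zero, are broken by vertex label via a stable sort) *)
definition trace :: "nat set \<Rightarrow> nat set set \<Rightarrow> edge_sample \<Rightarrow> nat \<Rightarrow> (nat \<times> ennreal) list" where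
  "trace V E \<omega> s = (let t = infection_time E \<omega> s in
      map (\<lambda>v. (v, t v)) (sort_key t (filter (\<lambda>v. t v < \<infinity>) (sorted_list_of_set V))))"

definition first_edge :: "(nat \<times> ennreal) list list \<Rightarrow> nat set set" where
  "first_edge trs = {{fst (tr ! 0), fst (tr ! 1)} | tr. tr \<in> set trs \<and> 2 \<le> length tr}"

definition first_edge_succeeds :: "nat \<Rightarrow> nat set \<Rightarrow> nat set set \<Rightarrow> (nat \<Rightarrow> nat \<times> edge_sample) set" where
  "first_edge_succeeds N V E = {\<omega>. first_edge (map (\<lambda>i. trace V E (snd (\<omega> i)) (fst (\<omega> i))) [0..<N]) = E}"

end

theory Submission
  imports Defs
begin

(*
  Edge lengths are almost surely positive. Then the source comes first in every trace, and the
  second vertex b is adjacent to the source: a walk reaching b through another neighbour w of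
  the source would make w infected strictly before b. Hence First-Edge never outputs a non-edge.

  Conversely, an edge {u, v} is output as soon as some trace starts at u, retains {u, v} with
  length at most theta = 1 / (Delta lambda), and gives all other edges at u length above theta.
  This event has probability at least (1/n) p (1 - e^(-1/Delta)) e^(-(Delta-1)/Delta) >=
  p / (6 n Delta), so with N >= 6 (d + 2) (n Delta / p) ln n traces a fixed edge is missed with
  probability at most n^(-(d+2)); a union bound over the at most n^2 edges gives the claim.
*)

lemma finite_uniform_gap:
  fixes f :: "'a \<Rightarrow> real"
  assumes "finite A" "\<And>x. x \<in> A \<Longrightarrow> a < f x"
  obtains \<epsilon> where "0 < \<epsilon>" "\<And>x. x \<in> A \<Longrightarrow> a + \<epsilon> \<le> f x"
proof (cases "A = {}")
  case True
  then show ?thesis using that[of 1] by simp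
next
  case False
  show ?thesis
  proof (rule that[of "Min (f ` A) - a"])
    show "0 < Min (f ` A) - a" using assms False by simp
    show "a + (Min (f ` A) - a) \<le> f x" if "x \<in> A" for x using assms that by simp
  qed
qed

lemma one_minus_pow_le_exp:
  fixes q m :: real
  assumes "0 \<le> q" "q \<le> m" "m \<le> 1"
  shows "(1 - m) ^ N \<le> exp (- q * N)"
proof -
  have "(1 - m) ^ N \<le> (1 - q) ^ N" using assms by (intro power_mono) auto
  also have "\<dots> \<le> exp (- q) ^ N"
    using assms exp_ge_add_one_self[of "- q"] by (intro power_mono) auto
  also have "\<dots> = exp (- q * N)" by (simp add: exp_of_nat_mult[symmetric] mult.commute)
  finally show ?thesis .
qed

lemma half_le_one_minus_exp_neg:
  fixes x :: real assumes "0 \<le> x" "x \<le> 1"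
  shows "x / 2 \<le> 1 - exp (- x)"
proof -
  have "exp (- x) \<le> 1 / (1 + x)"
    using assms exp_ge_add_one_self[of x] by (simp add: exp_minus field_simps)
  moreover have "x / 2 \<le> 1 - 1 / (1 + x)"
    using assms mult_left_le_one_le[of x x] by (simp add: field_simps)
  ultimately show ?thesis by linarith
qed

lemma INF_eq_INF_UNIV_if_top:
  fixes f :: "'a \<Rightarrow> 'b::complete_lattice"
  shows "(INF x\<in>A. f x) = (INF x. if x \<in> A then f x else top)"
proof (rule antisym)
  show "(INF x\<in>A. f x) \<le> (INF x. if x \<in> A then f x else top)"
    by (rule INF_greatest) (simp add: INF_lower)
  show "(INF x. if x \<in> A then f x else top) \<le> (INF x\<in>A. f x)"
  proof (rule INF_greatest)
    fix x assume "x \<in> A"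
    then show "(INF y. if y \<in> A then f y else top) \<le> f x"
      using INF_lower[of x UNIV "\<lambda>y. if y \<in> A then f y else top"] by simp
  qed
qed

lemma insort_key_cong_le:
  "(\<And>y. y \<in> set ys \<Longrightarrow> f x \<le> f y \<longleftrightarrow> g x \<le> g y) \<Longrightarrow> insort_key f x ys = insort_key g x ys"
  by (induction ys) auto

lemma sort_key_cong_le:
  "(\<And>a b. a \<in> set xs \<Longrightarrow> b \<in> set xs \<Longrightarrow> f a \<le> f b \<longleftrightarrow> g a \<le> g b) \<Longrightarrow> sort_key f xs = sort_key g xs"
  by (induction xs) (auto intro!: insort_key_cong_le)

lemma sort_key_nth_0_strict_min:
  fixes f :: "'a \<Rightarrow> 'b::linorder"
  assumes "a \<in> set xs" "\<And>y. y \<in> set xs \<Longrightarrow> y \<noteq> a \<Longrightarrow> f a < f y"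
  shows "sort_key f xs ! 0 = a"
proof -
  let ?ys = "sort_key f xs"
  obtain j where j: "j < length ?ys" "?ys ! j = a"
    using assms(1) by (metis in_set_conv_nth set_sort)
  then have "f (?ys ! 0) \<le> f a"
    using sorted_iff_nth_mono[THEN iffD1, OF sorted_sort_key[of f xs]] by auto
  moreover have "0 < length ?ys" using length_pos_if_in_set[OF assms(1)] by simp
  then have "?ys ! 0 \<in> set xs" using nth_mem[of 0 ?ys] by simp
  ultimately show ?thesis using assms(2) leD by blast
qed

lemma sort_key_nth_1:
  fixes f :: "'a \<Rightarrow> 'b::linorder"
  assumes "distinct xs" "2 \<le> length xs"
  shows "sort_key f xs ! 1 \<in> set xs - {sort_key f xs ! 0}"
    and "\<And>y. y \<in> set xs \<Longrightarrow> y \<noteq> sort_key f xs ! 0 \<Longrightarrow> f (sort_key f xs ! 1) \<le> f y"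
proof -
  let ?ys = "sort_key f xs"
  have len: "2 \<le> length ?ys" and dist: "distinct ?ys" using assms by simp_all
  then have "0 < length ?ys" "1 < length ?ys" by linarith+
  then have "?ys ! 1 \<in> set ?ys" "?ys ! 1 \<noteq> ?ys ! 0"
    using nth_mem[of 1 ?ys] nth_eq_iff_index_eq[OF dist] by auto
  then show "?ys ! 1 \<in> set xs - {?ys ! 0}" by simp
  fix y assume y: "y \<in> set xs" "y \<noteq> ?ys ! 0"
  obtain j where j: "j < length ?ys" "?ys ! j = y"
    using y(1) by (metis in_set_conv_nth set_sort)
  with y(2) have "1 \<le> j" by (cases j) auto
  then show "f (?ys ! 1) \<le> f y"
    using sorted_iff_nth_mono[THEN iffD1, OF sorted_sort_key[of f xs]] j by auto
qed

lemma sets_if_determined_by_countable: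
  assumes countable: "countable (h ` space M)"
    and level_sets: "\<And>d. {x \<in> space M. h x = d} \<in> sets M"
    and determined: "\<And>x y. x \<in> A \<Longrightarrow> y \<in> space M \<Longrightarrow> h y = h x \<Longrightarrow> y \<in> A"
  shows "A \<inter> space M \<in> sets M"
proof -
  have "A \<inter> space M = (\<Union>d \<in> h ` (A \<inter> space M). {x \<in> space M. h x = d})"
    using determined by blast
  also have "\<dots> \<in> sets M"
    using countable level_sets by (intro sets.countable_UN'') (auto intro: countable_subset)
  finally show ?thesis .
qed

lemma measure_pair_measure_Times:
  assumes "prob_space M1" "prob_space M2" "A \<in> sets M1" "B \<in> sets M2"
  shows "measure (M1 \<Otimes>\<^sub>M M2) (A \<times> B) = measure M1 A * measure M2 B"
proof -
  interpret pair_prob_space M1 M2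
    using assms(1,2) by (simp add: pair_prob_space_def pair_sigma_finite_def prob_space_imp_sigma_finite)
  have "emeasure (M1 \<Otimes>\<^sub>M M2) (A \<times> B) = emeasure M1 A * emeasure M2 B"
    using assms(3,4) by (rule M2.emeasure_pair_measure_Times)
  then show ?thesis
    by (simp add: M1.emeasure_eq_measure M2.emeasure_eq_measure emeasure_eq_measure ennreal_mult''[symmetric])
qed

lemma measure_PiM_PiE_const:
  assumes "finite I" "prob_space M" "A \<in> sets M"
  shows "measure (\<Pi>\<^sub>M i\<in>I. M) (\<Pi>\<^sub>E i\<in>I. A) = measure M A ^ card I"
proof -
  interpret M: prob_space M by fact
  interpret finite_product_prob_space "\<lambda>_. M" I
    by unfold_locales (simp_all add: assms(1) M.prob_space_axioms)
  show ?thesis using assms(3) by (simp add: prob_times)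
qed

lemma measure_PiM_never_le:
  fixes N :: nat
  assumes "prob_space M" "A \<in> sets M" "0 \<le> q" "q \<le> measure M A"
  shows "measure (\<Pi>\<^sub>M i\<in>{..<N}. M) (\<Pi>\<^sub>E i\<in>{..<N}. space M - A) \<le> exp (- q * N)"
proof -
  interpret prob_space M by fact
  have "measure (\<Pi>\<^sub>M i\<in>{..<N}. M) (\<Pi>\<^sub>E i\<in>{..<N}. space M - A) = (1 - measure M A) ^ N"
    using assms(2) by (simp add: measure_PiM_PiE_const prob_space_axioms prob_compl)
  also have "\<dots> \<le> exp (- q * N)" using assms(3,4) by (intro one_minus_pow_le_exp) auto
  finally show ?thesis .
qed

lemma (in prob_space) prob_Diff_UN_ge:
  assumes "finite I" "P \<in> events" "prob P = 1" "\<And>i. i \<in> I \<Longrightarrow> A i \<in> events"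
  shows "1 - (\<Sum>i\<in>I. prob (A i)) \<le> prob (P - (\<Union>i\<in>I. A i))"
proof -
  let ?U = "\<Union>i\<in>I. A i"
  have U: "?U \<in> events" using assms(1,4) by auto
  have "prob P \<le> prob ((P - ?U) \<union> ?U)" using assms(2) U by (intro finite_measure_mono) auto
  moreover have "prob ((P - ?U) \<union> ?U) \<le> prob (P - ?U) + prob ?U"
    using assms(2) U by (intro measure_Un_le) auto
  moreover have "prob ?U \<le> (\<Sum>i\<in>I. prob (A i))"
    using assms(1,4) by (intro finite_measure_subadditive_finite) auto
  ultimately show ?thesis using assms(3) by linarith
qed

lemma simple_graph_finite_edges:
  "simple_graph V E \<Longrightarrow> finite E"
  unfolding simple_graph_def by (auto intro: finite_subset[of _ "Pow V"])

lemma simple_graph_edgeE: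
  assumes "simple_graph V E" "e \<in> E"
  obtains u v where "e = {u, v}" "u \<in> V" "v \<in> V" "u \<noteq> v"
  using assms unfolding simple_graph_def by blast

lemma simple_graph_edgeD:
  assumes "simple_graph V E" "{x, y} \<in> E"
  shows "x \<noteq> y" "x \<in> V" "y \<in> V"
  using assms unfolding simple_graph_def by (auto simp: doubleton_eq_iff)

lemma simple_graph_card_edges_le:
  assumes "simple_graph V E"
  shows "card E \<le> card V ^ 2"
proof -
  have fin: "finite V" using assms by (simp add: simple_graph_def)
  have "E \<subseteq> (\<lambda>(a, b). {a, b}) ` (V \<times> V)" using assms unfolding simple_graph_def by auto
  then have "card E \<le> card ((\<lambda>(a, b). {a, b}) ` (V \<times> V))" using fin by (intro card_mono) auto
  also have "\<dots> \<le> card (V \<times> V)" using fin by (intro card_image_le) auto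
  finally show ?thesis by (simp add: card_cartesian_product power2_eq_square)
qed

lemma card_edges_mult_powr_le:
  assumes "simple_graph V E" "V \<noteq> {}"
  shows "card E * real (card V) powr - (d + 2) \<le> 1 / real (card V) powr d"
proof -
  let ?n = "real (card V)"
  have n: "0 < ?n" using assms by (simp add: simple_graph_def card_gt_0_iff)
  have "card E * ?n powr - (d + 2) \<le> ?n ^ 2 * ?n powr - (d + 2)"
    using simple_graph_card_edges_le[OF assms(1)] by (intro mult_right_mono) (simp_all flip: of_nat_power)
  also have "?n ^ 2 = ?n powr 2" using n by (simp add: powr_numeral)
  also have "?n powr 2 * ?n powr - (d + 2) = 1 / ?n powr d"
    unfolding powr_add[symmetric] by (simp add: powr_minus_divide)
  finally show ?thesis .
qed

lemma degree_le_max_degree: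
  "simple_graph V E \<Longrightarrow> u \<in> V \<Longrightarrow> degree E u \<le> max_degree V E"
  unfolding max_degree_def simple_graph_def by (intro Max_ge) auto

lemma degree_pos:
  "finite E \<Longrightarrow> e \<in> E \<Longrightarrow> u \<in> e \<Longrightarrow> 0 < degree E u"
  unfolding degree_def by (auto simp: card_gt_0_iff)

section \<open>Infection times\<close>

lemma infection_time_source: "infection_time E \<omega> s s = 0"
proof -
  have "[s] \<in> retained_walks E \<omega> s s" by (simp add: retained_walks_def)
  then have "infection_time E \<omega> s s \<le> (\<Sum>i < length [s] - 1. ennreal (snd (\<omega> {[s] ! i, [s] ! Suc i})))"
    unfolding infection_time_def by (rule INF_lower)
  then show ?thesis by simp
qed

lemma infection_time_le_edge:
  assumes "{s, w} \<in> E" "fst (\<omega> {s, w})"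
  shows "infection_time E \<omega> s w \<le> ennreal (snd (\<omega> {s, w}))"
proof -
  have "[s, w] \<in> retained_walks E \<omega> s w" using assms by (simp add: retained_walks_def)
  then have "infection_time E \<omega> s w \<le> (\<Sum>i < length [s, w] - 1. ennreal (snd (\<omega> {[s, w] ! i, [s, w] ! Suc i})))"
    unfolding infection_time_def by (rule INF_lower)
  then show ?thesis by simp
qed

lemma infection_time_ge_first_hop:
  assumes "w \<noteq> s" and \<mu>: "\<And>e. e \<in> E \<Longrightarrow> \<mu> \<le> snd (\<omega> e)"
    and first_hop: "\<And>x. {s, x} \<in> E \<Longrightarrow> fst (\<omega> {s, x}) \<Longrightarrow>
      c \<le> ennreal (snd (\<omega> {s, x})) + (if x = w then 0 else ennreal \<mu>)"
  shows "c \<le> infection_time E \<omega> s w"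
  unfolding infection_time_def
proof (rule INF_greatest)
  fix xs assume "xs \<in> retained_walks E \<omega> s w"
  then have walk: "xs \<noteq> []" "xs ! 0 = s" "last xs = w"
    and steps: "\<And>i. i < length xs - 1 \<Longrightarrow> {xs ! i, xs ! Suc i} \<in> E \<and> fst (\<omega> {xs ! i, xs ! Suc i})"
    by (auto simp: retained_walks_def hd_conv_nth)
  let ?len = "\<lambda>i. ennreal (snd (\<omega> {xs ! i, xs ! Suc i}))"
  have "length xs \<noteq> 1" using walk assms(1) by (cases xs) auto
  moreover have "length xs \<noteq> 0" using walk(1) by simp
  ultimately have two: "2 \<le> length xs" by linarith
  have "ennreal (snd (\<omega> {s, xs ! 1})) + (if xs ! 1 = w then 0 else ennreal \<mu>) \<le> sum ?len {..<length xs - 1}"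
  proof (cases "xs ! 1 = w")
    case True
    have "sum ?len {0} \<le> sum ?len {..<length xs - 1}" using two by (intro sum_mono2) auto
    then show ?thesis using True walk(2) by simp
  next
    case False
    have "length xs \<noteq> 2" using False walk by (auto simp: last_conv_nth)
    then have three: "3 \<le> length xs" using two by simp
    then have "\<mu> \<le> snd (\<omega> {xs ! 1, xs ! 2})" using \<mu> steps[of 1] by (simp add: numeral_2_eq_2)
    then have "ennreal (snd (\<omega> {s, xs ! 1})) + ennreal \<mu> \<le> sum ?len {0, 1}"
      using walk(2) by (simp add: numeral_2_eq_2 ennreal_leI)
    also have "\<dots> \<le> sum ?len {..<length xs - 1}" using three by (intro sum_mono2) auto
    finally show ?thesis using False by simp
  qed
  moreover have "{s, xs ! 1} \<in> E" "fst (\<omega> {s, xs ! 1})" using steps[of 0] two walk(2) by auto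
  ultimately show "c \<le> sum ?len {..<length xs - 1}" using first_hop order_trans by blast
qed

lemma infection_time_ge_min_length:
  assumes "w \<noteq> s" "\<And>e. e \<in> E \<Longrightarrow> \<mu> \<le> snd (\<omega> e)"
  shows "ennreal \<mu> \<le> infection_time E \<omega> s w"
  using assms by (rule infection_time_ge_first_hop) (auto intro: add_increasing2 ennreal_leI assms(2))

lemma positive_lengths_uniform_bound:
  fixes \<omega> :: edge_sample
  assumes "finite E" "\<forall>e\<in>E. 0 < snd (\<omega> e)"
  obtains \<mu> where "0 < \<mu>" "\<And>e. e \<in> E \<Longrightarrow> \<mu> \<le> snd (\<omega> e)"
  using finite_uniform_gap[of E 0 "\<lambda>e. snd (\<omega> e)"] assms by auto

definition trace_vertices :: "nat set \<Rightarrow> nat set set \<Rightarrow> edge_sample \<Rightarrow> nat \<Rightarrow> nat list" where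
  "trace_vertices V E \<omega> s = map fst (trace V E \<omega> s)"

section \<open>Traces and the First-Edge output\<close>

lemma trace_vertices_eq:
  "trace_vertices V E \<omega> s = sort_key (infection_time E \<omega> s)
     (filter (\<lambda>v. infection_time E \<omega> s v < \<infinity>) (sorted_list_of_set V))"
  unfolding trace_vertices_def trace_def Let_def by (simp add: comp_def)

lemma trace_vertices_first_two:
  assumes G: "simple_graph V E" and pos: "\<forall>e\<in>E. 0 < snd (\<omega> e)" and s: "s \<in> V"
    and len: "2 \<le> length (trace_vertices V E \<omega> s)"
  shows "trace_vertices V E \<omega> s ! 0 = s"
    and "trace_vertices V E \<omega> s ! 1 \<in> V - {s}"
    and "infection_time E \<omega> s (trace_vertices V E \<omega> s ! 1) < \<infinity>"
    and "\<And>y. y \<in> V \<Longrightarrow> y \<noteq> s \<Longrightarrow>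
      infection_time E \<omega> s (trace_vertices V E \<omega> s ! 1) \<le> infection_time E \<omega> s y"
proof -
  let ?t = "infection_time E \<omega> s"
  let ?xs = "filter (\<lambda>v. ?t v < \<infinity>) (sorted_list_of_set V)"
  have ys: "trace_vertices V E \<omega> s = sort_key ?t ?xs" by (rule trace_vertices_eq)
  have set_xs: "set ?xs = {v \<in> V. ?t v < \<infinity>}" using G by (simp add: simple_graph_def)
  obtain \<mu> where \<mu>: "0 < \<mu>" "\<And>e. e \<in> E \<Longrightarrow> \<mu> \<le> snd (\<omega> e)"
    using positive_lengths_uniform_bound[OF simple_graph_finite_edges[OF G] pos] by blast
  have "?t s < ?t y" if "y \<noteq> s" for y
  proof -
    have "0 < ennreal \<mu>" using \<mu>(1) by simp
    also have "\<dots> \<le> ?t y" using that \<mu>(2) by (rule infection_time_ge_min_length)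
    finally show ?thesis by (simp add: infection_time_source)
  qed
  moreover have "s \<in> set ?xs" using s set_xs by (simp add: infection_time_source)
  ultimately show first: "trace_vertices V E \<omega> s ! 0 = s"
    unfolding ys by (intro sort_key_nth_0_strict_min) auto
  have "distinct ?xs" "2 \<le> length ?xs" using len ys by simp_all
  note second = sort_key_nth_1[OF this, where f = ?t, folded ys, unfolded first]
  then show "trace_vertices V E \<omega> s ! 1 \<in> V - {s}"
    and "?t (trace_vertices V E \<omega> s ! 1) < \<infinity>" using set_xs by auto
  show "?t (trace_vertices V E \<omega> s ! 1) \<le> ?t y" if "y \<in> V" "y \<noteq> s" for y
  proof (cases "?t y < \<infinity>")
    case True
    then have "y \<in> set ?xs" using set_xs that by blast
    then show ?thesis using second(2) that by blast
  qed (simp add: infinity_ennreal_def top.not_eq_extremum[symmetric])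
qed

lemma trace_first_edge_in_edges:
  assumes G: "simple_graph V E" and pos: "\<forall>e\<in>E. 0 < snd (\<omega> e)" and s: "s \<in> V"
    and len: "2 \<le> length (trace_vertices V E \<omega> s)"
  shows "{trace_vertices V E \<omega> s ! 0, trace_vertices V E \<omega> s ! 1} \<in> E"
proof (rule ccontr)
  let ?t = "infection_time E \<omega> s"
  let ?b = "trace_vertices V E \<omega> s ! 1"
  note first_two = trace_vertices_first_two[OF G pos s len]
  assume "{trace_vertices V E \<omega> s ! 0, ?b} \<notin> E"
  then have not_edge: "{s, ?b} \<notin> E" using first_two(1) by simp
  obtain \<mu> where \<mu>: "0 < \<mu>" "\<And>e. e \<in> E \<Longrightarrow> \<mu> \<le> snd (\<omega> e)"
    using positive_lengths_uniform_bound[OF simple_graph_finite_edges[OF G] pos] by blast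
  \<comment> \<open>every first hop x differs from ?b and is infected no earlier than ?b\<close>
  have "?t ?b + ennreal \<mu> \<le> ?t ?b"
  proof (rule infection_time_ge_first_hop[OF _ \<mu>(2)])
    show "?b \<noteq> s" using first_two(2) by simp
    fix x assume x: "{s, x} \<in> E" "fst (\<omega> {s, x})"
    have "?t ?b \<le> ?t x" using first_two(4) simple_graph_edgeD[OF G x(1)] by auto
    also have "\<dots> \<le> ennreal (snd (\<omega> {s, x}))" using x by (rule infection_time_le_edge)
    finally show "?t ?b + ennreal \<mu> \<le> ennreal (snd (\<omega> {s, x})) + (if x = ?b then 0 else ennreal \<mu>)"
      using x(1) not_edge by (auto intro: add_right_mono)
  qed
  then show False using first_two(3) \<mu>(1) by (simp add: ennreal_add_left_cancel_le)
qed

lemma trace_first_edge_eq_short_edge: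
  assumes G: "simple_graph V E" and pos: "\<forall>e\<in>E. 0 < snd (\<omega> e)"
    and uv: "{u, v} \<in> E" "fst (\<omega> {u, v})" "snd (\<omega> {u, v}) \<le> \<theta>"
    and others: "\<forall>e\<in>E. u \<in> e \<and> e \<noteq> {u, v} \<longrightarrow> \<theta> < snd (\<omega> e)"
  shows "2 \<le> length (trace_vertices V E \<omega> u)"
    and "{trace_vertices V E \<omega> u ! 0, trace_vertices V E \<omega> u ! 1} = {u, v}"
proof -
  let ?t = "infection_time E \<omega> u"
  let ?xs = "filter (\<lambda>v. ?t v < \<infinity>) (sorted_list_of_set V)"
  let ?b = "trace_vertices V E \<omega> u ! 1"
  let ?luv = "snd (\<omega> {u, v})"
  note vertices = simple_graph_edgeD[OF G uv(1)]
  have tv: "?t v \<le> ennreal ?luv" using uv(1,2) by (rule infection_time_le_edge)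
  have "{u, v} \<subseteq> set ?xs"
    using G vertices tv by (auto simp: simple_graph_def infection_time_source le_less_trans)
  then have "card {u, v} \<le> length ?xs" by (metis card_mono distinct_card distinct_filter
      distinct_sorted_list_of_set List.finite_set)
  then show len: "2 \<le> length (trace_vertices V E \<omega> u)"
    using vertices(1) by (simp add: trace_vertices_eq)
  note first_two = trace_vertices_first_two[OF G pos vertices(2) len]
  obtain \<mu> where \<mu>: "0 < \<mu>" "\<And>e. e \<in> E \<Longrightarrow> \<mu> \<le> snd (\<omega> e)"
    using positive_lengths_uniform_bound[OF simple_graph_finite_edges[OF G] pos] by blast
  obtain \<delta> where \<delta>: "0 < \<delta>" "\<And>e. e \<in> {e \<in> E. u \<in> e \<and> e \<noteq> {u, v}} \<Longrightarrow> \<theta> + \<delta> \<le> snd (\<omega> e)"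
    using finite_uniform_gap[of "{e \<in> E. u \<in> e \<and> e \<noteq> {u, v}}" \<theta> "\<lambda>e. snd (\<omega> e)"]
      simple_graph_finite_edges[OF G] others by auto
  define \<epsilon> where "\<epsilon> = min \<mu> \<delta>"
  have "?b = v"
  proof (rule ccontr)
    assume "?b \<noteq> v"
    \<comment> \<open>?b is reached via {u, v} and one more edge, or via another edge at u, longer than \<theta>\<close>
    have "ennreal (?luv + \<epsilon>) \<le> ?t ?b"
    proof (rule infection_time_ge_first_hop[where \<mu> = \<epsilon>])
      show "?b \<noteq> u" using first_two(2) by simp
      show "\<epsilon> \<le> snd (\<omega> e)" if "e \<in> E" for e using \<mu>(2)[OF that] by (simp add: \<epsilon>_def)
      fix x assume x: "{u, x} \<in> E" "fst (\<omega> {u, x})"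
      show "ennreal (?luv + \<epsilon>) \<le> ennreal (snd (\<omega> {u, x})) + (if x = ?b then 0 else ennreal \<epsilon>)"
      proof (cases "x = v")
        case True
        then show ?thesis
          using \<open>?b \<noteq> v\<close> pos uv(1) \<mu>(1) \<delta>(1) by (simp add: \<epsilon>_def ennreal_plus less_imp_le)
      next
        case False
        then have "{u, x} \<noteq> {u, v}" by (auto simp: doubleton_eq_iff)
        then have "?luv + \<epsilon> \<le> snd (\<omega> {u, x})"
          using \<delta>(2)[of "{u, x}"] x(1) uv(3) by (auto simp: \<epsilon>_def)
        then show ?thesis by (auto intro: add_increasing2 ennreal_leI)
      qed
    qed
    also have "?t ?b \<le> ?t v" using first_two(4) vertices by auto
    also note tv
    finally have "ennreal (?luv + \<epsilon>) \<le> ennreal ?luv" .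
    moreover have "0 \<le> ?luv" using pos uv(1) by (simp add: less_imp_le)
    ultimately have "?luv + \<epsilon> \<le> ?luv" by (simp add: ennreal_le_iff)
    then show False using \<mu>(1) \<delta>(1) by (simp add: \<epsilon>_def)
  qed
  then show "{trace_vertices V E \<omega> u ! 0, ?b} = {u, v}" using first_two(1) by simp
qed

lemma first_edge_map_upt:
  "first_edge (map f [0..<N]) = {{fst (f i ! 0), fst (f i ! 1)} | i. i < N \<and> 2 \<le> length (f i)}"
  unfolding first_edge_def by auto

lemma first_edge_traces:
  "first_edge (map (\<lambda>i. trace V E (snd (\<omega> i)) (fst (\<omega> i))) [0..<N]) =
   {{trace_vertices V E (snd (\<omega> i)) (fst (\<omega> i)) ! 0, trace_vertices V E (snd (\<omega> i)) (fst (\<omega> i)) ! 1} | i.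
     i < N \<and> 2 \<le> length (trace_vertices V E (snd (\<omega> i)) (fst (\<omega> i)))}"
proof -
  have "map fst tr ! 0 = fst (tr ! 0)" "map fst tr ! 1 = fst (tr ! 1)"
    if "2 \<le> length tr" for tr :: "(nat \<times> ennreal) list"
    using that by (auto intro!: nth_map)
  then show ?thesis
    unfolding first_edge_map_upt trace_vertices_def by (intro Collect_cong ex_cong1) auto
qed

section \<open>Measurability of the success event\<close>

lemma infection_time_eq_INF_UNIV:
  "infection_time E \<omega> s v = (INF xs. if xs \<in> retained_walks E \<omega> s v
     then \<Sum>i < length xs - 1. ennreal (snd (\<omega> {xs ! i, xs ! Suc i})) else \<infinity>)"
  unfolding infection_time_def by (subst INF_eq_INF_UNIV_if_top) simp

lemma measurable_infection_time[measurable]: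
  assumes "finite E"
  shows "(\<lambda>x. infection_time E (snd x) (fst x) v) \<in> borel_measurable (cascade_measure V E p l)"
proof -
  let ?walk_time = "\<lambda>xs x. if xs \<in> retained_walks E (snd x) (fst x) v
    then \<Sum>i < length xs - 1. ennreal (snd (snd x {xs ! i, xs ! Suc i})) else \<infinity>"
  \<comment> \<open>only the edges of E are coordinates of the sample space\<close>
  have "?walk_time xs \<in> borel_measurable (cascade_measure V E p l)" for xs
  proof (cases "\<forall>i < length xs - 1. {xs ! i, xs ! Suc i} \<in> E")
    case False
    then have "xs \<notin> retained_walks E \<omega> s v" for \<omega> s by (auto simp: retained_walks_def)
    then show ?thesis by simp
  next
    case True
    let ?C = "measure_pmf (pmf_of_set V) \<Otimes>\<^sub>M (\<Pi>\<^sub>M e\<in>E. measure_pmf (bernoulli_pmf p) \<Otimes>\<^sub>M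
      density lborel (\<lambda>x. ennreal (exponential_density l x)))"
    have step_in_E: "{xs ! i, xs ! Suc i} \<in> E" if "i \<in> {..<length xs - 1}" for i
      using True that by simp
    have "?walk_time xs = (\<lambda>x. if (xs \<noteq> [] \<and> last xs = v) \<and> hd xs = fst x \<and>
        (\<forall>i\<in>{..<length xs - 1}. fst (snd x {xs ! i, xs ! Suc i}))
      then \<Sum>i < length xs - 1. ennreal (snd (snd x {xs ! i, xs ! Suc i})) else \<infinity>)"
      using True by (auto simp: retained_walks_def fun_eq_iff)
    also have "\<dots> \<in> borel_measurable ?C"
    proof (intro measurable_If borel_measurable_sum borel_measurable_const)
      show "(\<lambda>x. ennreal (snd (snd x {xs ! i, xs ! Suc i}))) \<in> borel_measurable ?C"
        if "i \<in> {..<length xs - 1}" for i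
        using step_in_E[OF that] by measurable
      have [measurable]: "Measurable.pred ?C (\<lambda>x. hd xs = fst x)"
        by (rule measurable_compose[OF measurable_fst]) simp
    qed (use step_in_E in measurable)
    finally show ?thesis unfolding cascade_measure_def edge_measure_def .
  qed
  then show ?thesis
    unfolding infection_time_eq_INF_UNIV by measurable
qed

(* The vertex order of a trace depends only on this finite datum, so the success event is a
   countable union of its level sets. *)
definition infection_pattern :: "nat set \<Rightarrow> nat set set \<Rightarrow> edge_sample \<Rightarrow> nat \<Rightarrow> (nat \<times> nat) set \<times> nat set" where
  "infection_pattern V E \<omega> s =
    ({(a, b) \<in> V \<times> V. infection_time E \<omega> s a \<le> infection_time E \<omega> s b},
     {v \<in> V. infection_time E \<omega> s v < \<infinity>})"

lemma trace_vertices_eq_if_infection_pattern_eq: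
  assumes "finite V" "infection_pattern V E \<omega> s = infection_pattern V E \<omega>' s'"
  shows "trace_vertices V E \<omega> s = trace_vertices V E \<omega>' s'"
proof -
  let ?t = "infection_time E \<omega> s" and ?t' = "infection_time E \<omega>' s'"
  have order: "?t a \<le> ?t b \<longleftrightarrow> ?t' a \<le> ?t' b" if "a \<in> V" "b \<in> V" for a b
    using assms(2) that unfolding infection_pattern_def by (auto simp: set_eq_iff)
  have infected: "?t v < \<infinity> \<longleftrightarrow> ?t' v < \<infinity>" if "v \<in> V" for v
    using assms(2) that unfolding infection_pattern_def by (auto simp: set_eq_iff)
  have "filter (\<lambda>v. ?t v < \<infinity>) (sorted_list_of_set V) = filter (\<lambda>v. ?t' v < \<infinity>) (sorted_list_of_set V)"
    using assms(1) infected by (intro filter_cong) auto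
  then show ?thesis
    unfolding trace_vertices_eq using assms(1) order by (auto intro!: sort_key_cong_le)
qed

lemma pred_infection_pattern_eq:
  assumes "finite E"
  shows "Measurable.pred (cascade_measure V E p l) (\<lambda>x. infection_pattern V E (snd x) (fst x) = d)"
proof -
  have "(infection_pattern V E (snd x) (fst x) = d) \<longleftrightarrow> fst d \<subseteq> V \<times> V \<and> snd d \<subseteq> V \<and>
      (\<forall>a\<in>V. \<forall>b\<in>V. (infection_time E (snd x) (fst x) a \<le> infection_time E (snd x) (fst x) b) = ((a, b) \<in> fst d)) \<and>
      (\<forall>v\<in>V. (infection_time E (snd x) (fst x) v < \<infinity>) = (v \<in> snd d))" for x
    unfolding infection_pattern_def by (cases d) (auto simp: set_eq_iff)
  then show ?thesis using assms by simp
qed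

lemma sets_first_edge_succeeds:
  assumes "finite V" "finite E"
  shows "first_edge_succeeds N V E \<inter> space (cascades_measure N V E p l) \<in> sets (cascades_measure N V E p l)"
proof -
  let ?M = "cascades_measure N V E p l"
  let ?pattern = "\<lambda>x. infection_pattern V E (snd x) (fst x)"
  let ?patterns = "\<lambda>\<omega>. \<lambda>i\<in>{..<N}. ?pattern (\<omega> i)"
  show ?thesis
  proof (rule sets_if_determined_by_countable[where h = ?patterns])
    have "?patterns \<omega> \<in> (\<Pi>\<^sub>E i\<in>{..<N}. Pow (V \<times> V) \<times> Pow V)" for \<omega>
      unfolding restrict_PiE_iff by (auto simp: infection_pattern_def)
    then have "?patterns ` space ?M \<subseteq> (\<Pi>\<^sub>E i\<in>{..<N}. Pow (V \<times> V) \<times> Pow V)" by blast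
    moreover have "countable (\<Pi>\<^sub>E i\<in>{..<N}. Pow (V \<times> V) \<times> Pow V)"
      using assms(1) by (intro countable_PiE countable_finite) auto
    ultimately show "countable (?patterns ` space ?M)" by (rule countable_subset)
  next
    fix d
    have "?patterns \<omega> = d \<longleftrightarrow> d \<in> extensional {..<N} \<and> (\<forall>i\<in>{..<N}. ?pattern (\<omega> i) = d i)" for \<omega>
      by (auto simp: fun_eq_iff extensional_def)
    moreover have "Measurable.pred ?M (\<lambda>\<omega>. ?pattern (\<omega> i) = d i)" if "i \<in> {..<N}" for i
      unfolding cascades_measure_def
      by (rule measurable_compose[OF measurable_component_singleton[OF that] pred_infection_pattern_eq[OF assms(2)]])
    ultimately show "{\<omega> \<in> space ?M. ?patterns \<omega> = d} \<in> sets ?M" by simp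
  next
    fix \<omega> \<omega>' assume "\<omega> \<in> first_edge_succeeds N V E" "?patterns \<omega>' = ?patterns \<omega>"
    have "trace_vertices V E (snd (\<omega>' i)) (fst (\<omega>' i)) = trace_vertices V E (snd (\<omega> i)) (fst (\<omega> i))"
      if "i < N" for i
      using that assms(1) \<open>?patterns \<omega>' = ?patterns \<omega>\<close>
      by (intro trace_vertices_eq_if_infection_pattern_eq) (auto dest: fun_cong[of _ _ i])
    then have "first_edge (map (\<lambda>i. trace V E (snd (\<omega>' i)) (fst (\<omega>' i))) [0..<N]) =
        first_edge (map (\<lambda>i. trace V E (snd (\<omega> i)) (fst (\<omega> i))) [0..<N])"
      unfolding first_edge_traces by (intro Collect_cong ex_cong1) auto
    with \<open>\<omega> \<in> first_edge_succeeds N V E\<close> show "\<omega>' \<in> first_edge_succeeds N V E"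
      unfolding first_edge_succeeds_def by simp
  qed
qed

section \<open>Edge and cascade distributions\<close>

lemma prob_space_edge_measure: "0 \<le> p \<Longrightarrow> p \<le> 1 \<Longrightarrow> 0 < l \<Longrightarrow> prob_space (edge_measure p l)"
  unfolding edge_measure_def
  by (intro prob_space_pair prob_space_measure_pmf prob_space_exponential_density)

lemma prob_space_cascade_measure:
  "finite V \<Longrightarrow> V \<noteq> {} \<Longrightarrow> 0 \<le> p \<Longrightarrow> p \<le> 1 \<Longrightarrow> 0 < l \<Longrightarrow> prob_space (cascade_measure V E p l)"
  unfolding cascade_measure_def
  by (intro prob_space_pair prob_space_measure_pmf prob_space_PiM prob_space_edge_measure)

lemma measure_exponential_greaterThan:
  fixes l t :: real assumes "0 < l" "0 \<le> t"
  shows "measure (density lborel (\<lambda>x. ennreal (exponential_density l x))) {t<..} = exp (- t * l)"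
proof -
  let ?D = "density lborel (\<lambda>x. ennreal (exponential_density l x))"
  interpret prob_space ?D using prob_space_exponential_density[OF assms(1)] .
  have "distributed ?D lborel (\<lambda>x. x) (exponential_density l)"
    unfolding distributed_def by (auto simp: distr_id2)
  then have "\<P>(x in ?D. t < x) = exp (- t * l)"
    using assms(2,1) by (rule exponential_distributedD_gt)
  moreover have "{x \<in> space ?D. t < x} = {t<..}" by auto
  ultimately show ?thesis by simp
qed

lemma sets_edge_measure_Times [measurable]:
  "A \<times> B \<in> sets (edge_measure p l)" if "B \<in> sets borel"
  using that unfolding edge_measure_def by (intro pair_measureI) auto

lemma measure_edge_measure_long:
  assumes "0 \<le> p" "p \<le> 1" "0 < l" "0 \<le> t"
  shows "measure (edge_measure p l) (UNIV \<times> {t<..}) = exp (- t * l)"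
  unfolding edge_measure_def using assms
  by (subst measure_pair_measure_Times)
    (auto intro: prob_space_measure_pmf prob_space_exponential_density simp: measure_exponential_greaterThan)

lemma measure_edge_measure_short:
  assumes "0 \<le> p" "p \<le> 1" "0 < l" "0 \<le> t"
  shows "measure (edge_measure p l) ({True} \<times> {0<..t}) = p * (1 - exp (- t * l))"
proof -
  let ?D = "density lborel (\<lambda>x. ennreal (exponential_density l x))"
  interpret D: prob_space ?D using prob_space_exponential_density[OF assms(3)] .
  have "{0<..t} = {0<..} - {t<..}" by auto
  then have "measure ?D {0<..t} = 1 - exp (- t * l)"
    using assms by (simp add: D.finite_measure_Diff measure_exponential_greaterThan)
  then show ?thesis
    unfolding edge_measure_def using assms
    by (subst measure_pair_measure_Times)
      (auto intro: prob_space_measure_pmf D.prob_space_axioms simp: measure_pmf_single)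
qed

lemma measure_cascade_measure_Times:
  assumes "finite V" "V \<noteq> {}" "0 \<le> p" "p \<le> 1" "0 < l" "finite E"
    and A: "\<And>e. e \<in> E \<Longrightarrow> A e \<in> sets (edge_measure p l)" and U: "U \<subseteq> V"
  shows "measure (cascade_measure V E p l) (U \<times> (\<Pi>\<^sub>E e\<in>E. A e)) =
    card U / card V * (\<Prod>e\<in>E. measure (edge_measure p l) (A e))"
proof -
  interpret edge: prob_space "edge_measure p l" using assms by (intro prob_space_edge_measure)
  interpret edges: finite_product_prob_space "\<lambda>_. edge_measure p l" E
    by unfold_locales (simp_all add: assms(6) edge.prob_space_axioms)
  have "measure (measure_pmf (pmf_of_set V)) U = card U / card V"
    using assms by (simp add: measure_pmf_of_set Int_absorb1)
  then show ?thesis unfolding cascade_measure_def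
    by (subst measure_pair_measure_Times)
      (auto simp: A edges.prob_times intro: prob_space_measure_pmf edges.prob_space_axioms
        sets_PiM_I_finite[OF assms(6)])
qed

lemma measure_cascade_positive_lengths:
  assumes "finite V" "V \<noteq> {}" "0 \<le> p" "p \<le> 1" "0 < l" "finite E"
  shows "measure (cascade_measure V E p l) (V \<times> (\<Pi>\<^sub>E e\<in>E. UNIV \<times> {0<..})) = 1"
  using assms
  by (subst measure_cascade_measure_Times) (auto simp: measure_edge_measure_long[of p l 0, simplified])

section \<open>Short isolated first hops\<close>

(* The factor {0<..} on the edges away from u records that all lengths are positive, which holds
   almost surely and is needed for the trace to start with the source. *)
definition short_first_hop_event :: "nat set set \<Rightarrow> real \<Rightarrow> nat \<Rightarrow> nat set \<Rightarrow> (nat \<times> edge_sample) set" where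
  "short_first_hop_event E \<theta> u e = {u} \<times> (\<Pi>\<^sub>E e'\<in>E.
     if e' = e then {True} \<times> {0<..\<theta>} else if u \<in> e' then UNIV \<times> {\<theta><..} else UNIV \<times> {0<..})"

lemma sets_short_first_hop_event:
  "finite E \<Longrightarrow> short_first_hop_event E \<theta> u e \<in> sets (cascade_measure V E p l)"
  unfolding short_first_hop_event_def cascade_measure_def
  by (intro pair_measureI sets_PiM_I_finite) auto

lemma measure_short_first_hop_event:
  assumes "finite V" "V \<noteq> {}" "0 \<le> p" "p \<le> 1" "0 < l" "finite E"
    and "e \<in> E" "u \<in> e" "u \<in> V" "0 \<le> \<theta>"
  shows "measure (cascade_measure V E p l) (short_first_hop_event E \<theta> u e) =
    p * (1 - exp (- \<theta> * l)) * exp (- \<theta> * l) ^ (degree E u - 1) / card V"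
proof -
  let ?m = "\<lambda>e'. measure (edge_measure p l)
    (if e' = e then {True} \<times> {0<..\<theta>} else if u \<in> e' then UNIV \<times> {\<theta><..} else UNIV \<times> {0<..})"
  have "{e' \<in> E - {e}. u \<in> e'} = {e' \<in> E. u \<in> e'} - {e}" by auto
  then have card: "card {e' \<in> E - {e}. u \<in> e'} = degree E u - 1"
    using assms by (simp add: degree_def card_Diff_singleton)
  have "(\<Prod>e'\<in>E - {e}. ?m e') = (\<Prod>e'\<in>E - {e}. if u \<in> e' then exp (- \<theta> * l) else 1)"
    using assms measure_edge_measure_long[of p l 0] by (intro prod.cong) (auto simp: measure_edge_measure_long)
  also have "\<dots> = (\<Prod>e'\<in>{e' \<in> E - {e}. u \<in> e'}. exp (- \<theta> * l))"
    by (rule prod.inter_filter[symmetric]) (simp add: assms(6))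
  also have "\<dots> = exp (- \<theta> * l) ^ (degree E u - 1)"
    by (simp only: prod_constant card)
  finally have "(\<Prod>e'\<in>E - {e}. ?m e') = exp (- \<theta> * l) ^ (degree E u - 1)" .
  moreover have "(\<Prod>e'\<in>E. ?m e') = ?m e * (\<Prod>e'\<in>E - {e}. ?m e')"
    using assms(6,7) by (rule prod.remove)
  ultimately show ?thesis
    unfolding short_first_hop_event_def using assms
    by (subst measure_cascade_measure_Times) (auto simp: measure_edge_measure_short)
qed

lemma short_first_hop_probability_ge:
  fixes D k :: nat assumes "1 \<le> D" "k \<le> D - 1"
  shows "1 / (6 * real D) \<le> (1 - exp (- 1 / D)) * exp (- 1 / D) ^ k"
proof -
  have "1 / 3 \<le> exp (- 1 :: real)" using exp_le by (simp add: exp_minus field_simps)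
  also have "\<dots> \<le> exp (- 1 / D) ^ (D - 1)"
    using assms(1) by (simp add: exp_of_nat_mult[symmetric] field_simps)
  also have "\<dots> \<le> exp (- 1 / D) ^ k" using assms(2) by (intro power_decreasing) auto
  finally have "1 / 3 \<le> exp (- 1 / D) ^ k" .
  moreover have "1 / (2 * D) \<le> 1 - exp (- 1 / D)"
    using half_le_one_minus_exp_neg[of "1 / D"] assms(1) by (simp add: field_simps)
  ultimately have "1 / (2 * D) * (1 / 3) \<le> (1 - exp (- 1 / D)) * exp (- 1 / D) ^ k"
    by (intro mult_mono) auto
  then show ?thesis by simp
qed

lemma measure_short_first_hop_event_ge:
  assumes "finite V" "V \<noteq> {}" "0 \<le> p" "p \<le> 1" "0 < l" "finite E"
    and "e \<in> E" "u \<in> e" "u \<in> V" "degree E u \<le> D"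
  shows "p / (6 * real (card V) * real D) \<le>
    measure (cascade_measure V E p l) (short_first_hop_event E (1 / (D * l)) u e)"
proof -
  let ?X = "exp (- 1 / D)" and ?k = "degree E u - 1"
  have D: "1 \<le> D" using degree_pos[of E e u] assms(6-8,10) by linarith
  have "measure (cascade_measure V E p l) (short_first_hop_event E (1 / (D * l)) u e) =
      p * (1 - exp (- (1 / (D * l)) * l)) * exp (- (1 / (D * l)) * l) ^ ?k / card V"
    using assms D by (intro measure_short_first_hop_event) auto
  also have "- (1 / (D * l)) * l = - 1 / D" using assms(5) by simp
  finally have "measure (cascade_measure V E p l) (short_first_hop_event E (1 / (D * l)) u e) =
      p * ((1 - ?X) * ?X ^ ?k) / card V" by (simp only: mult.assoc)
  moreover have "p / (6 * real (card V) * real D) = p * (1 / (6 * real D)) / card V" by simp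
  moreover have "1 / (6 * real D) \<le> (1 - ?X) * ?X ^ ?k"
    using D assms(10) by (intro short_first_hop_probability_ge) auto
  ultimately show ?thesis
    using assms(3) by (metis divide_right_mono mult_left_mono of_nat_0_le_iff)
qed

lemma measure_no_short_first_hop_le:
  assumes "finite V" "V \<noteq> {}" "0 < p" "p \<le> 1" "0 < l" "finite E"
    and "e \<in> E" "u \<in> e" "u \<in> V" "degree E u \<le> D"
    and N: "6 * c * real (card V) * real D / p * ln (real (card V)) \<le> real N"
  shows "measure (cascades_measure N V E p l) (\<Pi>\<^sub>E i\<in>{..<N}.
    space (cascade_measure V E p l) - short_first_hop_event E (1 / (D * l)) u e) \<le> real (card V) powr - c"
proof -
  let ?n = "real (card V)"
  have n: "0 < ?n" using assms(1,2) by (simp add: card_gt_0_iff)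
  have D: "1 \<le> D" using degree_pos[of E e u] assms(6-8,10) by linarith
  define q where "q = p / (6 * ?n * D)"
  have q: "0 \<le> q" "q \<le> measure (cascade_measure V E p l) (short_first_hop_event E (1 / (D * l)) u e)"
    unfolding q_def using assms by (auto intro!: measure_short_first_hop_event_ge)
  have "c * ln ?n = q * (6 * c * ?n * D / p * ln ?n)"
    unfolding q_def using assms(3) D n by (simp add: field_simps)
  also have "\<dots> \<le> q * N" using N q(1) by (intro mult_left_mono)
  finally have "exp (- q * N) \<le> exp (- (c * ln ?n))" by simp
  also have "\<dots> = ?n powr - c" using n by (simp add: powr_def)
  finally have "exp (- q * N) \<le> ?n powr - c" .
  moreover have "prob_space (cascade_measure V E p l)"
    using assms by (intro prob_space_cascade_measure) auto
  ultimately show ?thesis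
    unfolding cascades_measure_def using q assms(6)
    by (auto intro: order_trans[OF measure_PiM_never_le] sets_short_first_hop_event)
qed

lemma first_edge_succeeds_if_short_first_hops:
  assumes G: "simple_graph V E" and \<theta>: "0 \<le> \<theta>"
    and positive: "\<forall>i<N. \<omega> i \<in> V \<times> (\<Pi>\<^sub>E e\<in>E. UNIV \<times> {0<..})"
    and hit: "\<forall>e\<in>E. \<exists>u v i. e = {u, v} \<and> i < N \<and> \<omega> i \<in> short_first_hop_event E \<theta> u e"
  shows "\<omega> \<in> first_edge_succeeds N V E"
proof -
  let ?vs = "\<lambda>i. trace_vertices V E (snd (\<omega> i)) (fst (\<omega> i))"
  have "{{?vs i ! 0, ?vs i ! 1} | i. i < N \<and> 2 \<le> length (?vs i)} = E"
  proof (intro equalityI subsetI)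
    fix e assume "e \<in> {{?vs i ! 0, ?vs i ! 1} | i. i < N \<and> 2 \<le> length (?vs i)}"
    then obtain i where i: "i < N" "2 \<le> length (?vs i)" and e: "e = {?vs i ! 0, ?vs i ! 1}"
      by blast
    from positive i(1) have "fst (\<omega> i) \<in> V" "snd (\<omega> i) \<in> (\<Pi>\<^sub>E e\<in>E. UNIV \<times> {0<..})"
      by (simp_all add: mem_Times_iff)
    then have "\<forall>e\<in>E. 0 < snd (snd (\<omega> i) e)" by (auto dest: PiE_mem)
    from trace_first_edge_in_edges[OF G this \<open>fst (\<omega> i) \<in> V\<close> i(2)] show "e \<in> E"
      unfolding e .
  next
    fix e assume "e \<in> E"
    then obtain u v i where e: "e = {u, v}" and i: "i < N" "\<omega> i \<in> short_first_hop_event E \<theta> u e"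
      using hit by blast
    let ?\<omega> = "snd (\<omega> i)"
    have source: "fst (\<omega> i) = u" and in_event: "?\<omega> \<in> (\<Pi>\<^sub>E e'\<in>E.
        if e' = e then {True} \<times> {0<..\<theta>} else if u \<in> e' then UNIV \<times> {\<theta><..} else UNIV \<times> {0<..})"
      using i(2) unfolding short_first_hop_event_def mem_Times_iff by simp_all
    have lengths: "?\<omega> e' \<in> (if e' = e then {True} \<times> {0<..\<theta>}
        else if u \<in> e' then UNIV \<times> {\<theta><..} else UNIV \<times> {0<..})" if "e' \<in> E" for e'
      using in_event that by (rule PiE_mem)
    have "0 < snd (?\<omega> e')" if "e' \<in> E" for e'
      using lengths[OF that] \<theta> by (cases "e' = e"; cases "u \<in> e'") auto
    moreover have "fst (?\<omega> {u, v})" "snd (?\<omega> {u, v}) \<le> \<theta>"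
      using lengths[OF \<open>e \<in> E\<close>] e by auto
    moreover have "\<theta> < snd (?\<omega> e')" if "e' \<in> E" "u \<in> e'" "e' \<noteq> {u, v}" for e'
      using lengths[OF that(1)] that(2,3) e by auto
    ultimately have "2 \<le> length (?vs i) \<and> {?vs i ! 0, ?vs i ! 1} = e"
      using trace_first_edge_eq_short_edge[OF G, of ?\<omega> u v \<theta>] \<open>e \<in> E\<close> e source by auto
    with i(1) show "e \<in> {{?vs i ! 0, ?vs i ! 1} | i. i < N \<and> 2 \<le> length (?vs i)}"
      by blast
  qed
  then show ?thesis by (simp add: first_edge_succeeds_def first_edge_traces)
qed

lemma first_edge_succeeds_probability_ge:
  assumes G: "simple_graph V E" and "V \<noteq> {}" and p: "0 < p" "p \<le> 1" and l: "0 < l"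
    and N: "6 * (d + 2) * real (card V) * real (max_degree V E) / p * ln (real (card V)) \<le> real N"
  shows "1 - 1 / real (card V) powr d \<le>
    measure (cascades_measure N V E p l) (first_edge_succeeds N V E \<inter> space (cascades_measure N V E p l))"
proof -
  let ?C = "cascade_measure V E p l" and ?M = "cascades_measure N V E p l"
  let ?n = "real (card V)" and ?D = "max_degree V E"
  have finV: "finite V" using G by (simp add: simple_graph_def)
  have finE: "finite E" using G by (rule simple_graph_finite_edges)
  interpret C: prob_space ?C using finV assms by (intro prob_space_cascade_measure) auto
  have M: "?M = (\<Pi>\<^sub>M i\<in>{..<N}. ?C)" by (simp add: cascades_measure_def)
  interpret M: prob_space ?M unfolding M by (intro prob_space_PiM C.prob_space_axioms)
  define \<theta> where "\<theta> = 1 / (?D * l)"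
  have "\<forall>e\<in>E. \<exists>u. u \<in> V \<and> (\<exists>v. e = {u, v})" by (metis G simple_graph_edgeE)
  from bchoice[OF this] obtain src where src: "\<forall>e\<in>E. src e \<in> V \<and> (\<exists>v. e = {src e, v})"
    by blast
  define positive where "positive = (\<Pi>\<^sub>E i\<in>{..<N}. V \<times> (\<Pi>\<^sub>E e\<in>E. (UNIV :: bool set) \<times> {0::real<..}))"
  define miss where "miss e = (\<Pi>\<^sub>E i\<in>{..<N}. space ?C - short_first_hop_event E \<theta> (src e) e)" for e
  have positive_lengths_sets: "V \<times> (\<Pi>\<^sub>E e\<in>E. UNIV \<times> {0<..}) \<in> sets ?C"
    unfolding cascade_measure_def using finE by (intro pair_measureI sets_PiM_I_finite) auto
  then have positive_sets: "positive \<in> sets ?M"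
    unfolding positive_def M by (intro sets_PiM_I_finite) auto
  have miss_sets: "miss e \<in> sets ?M" for e
    unfolding miss_def M using sets_short_first_hop_event[OF finE] by (intro sets_PiM_I_finite) auto
  have "measure ?M positive = 1"
    unfolding positive_def M using finV assms finE
    by (subst measure_PiM_PiE_const)
      (auto simp: measure_cascade_positive_lengths C.prob_space_axioms positive_lengths_sets)
  have "measure ?M (miss e) \<le> ?n powr - (d + 2)" if "e \<in> E" for e
    unfolding miss_def \<theta>_def using finV assms finE that src degree_le_max_degree[OF G]
    by (intro measure_no_short_first_hop_le) auto
  then have "1 - 1 / ?n powr d \<le> 1 - (\<Sum>e\<in>E. measure ?M (miss e))"
    using sum_mono[of E "\<lambda>e. measure ?M (miss e)" "\<lambda>_. ?n powr - (d + 2)"]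
      card_edges_mult_powr_le[OF G \<open>V \<noteq> {}\<close>, of d] by simp
  also have "\<dots> \<le> measure ?M (positive - (\<Union>e\<in>E. miss e))"
    using finE positive_sets \<open>measure ?M positive = 1\<close> miss_sets by (rule M.prob_Diff_UN_ge)
  also have "\<dots> \<le> measure ?M (first_edge_succeeds N V E \<inter> space ?M)"
  proof (intro M.finite_measure_mono subsetI IntI)
    fix \<omega> assume \<omega>: "\<omega> \<in> positive - (\<Union>e\<in>E. miss e)"
    then show in_space: "\<omega> \<in> space ?M" using sets.sets_into_space[OF positive_sets] by blast
    then have space: "\<omega> i \<in> space ?C" if "i < N" for i
      using that unfolding M space_PiM by (auto dest: PiE_mem)
    show "\<omega> \<in> first_edge_succeeds N V E"
    proof (rule first_edge_succeeds_if_short_first_hops[OF G])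
      show "0 \<le> \<theta>" using l by (simp add: \<theta>_def)
      show "\<forall>i<N. \<omega> i \<in> V \<times> (\<Pi>\<^sub>E e\<in>E. UNIV \<times> {0<..})"
        using \<omega> unfolding positive_def by (auto dest: PiE_mem)
      show "\<forall>e\<in>E. \<exists>u v i. e = {u, v} \<and> i < N \<and> \<omega> i \<in> short_first_hop_event E \<theta> u e"
      proof
        fix e assume "e \<in> E"
        with \<omega> obtain i where "i < N" "\<omega> i \<in> short_first_hop_event E \<theta> (src e) e"
          using in_space space unfolding miss_def M space_PiM by (auto simp: PiE_iff)
        with src \<open>e \<in> E\<close> show "\<exists>u v i. e = {u, v} \<and> i < N \<and> \<omega> i \<in> short_first_hop_event E \<theta> u e"
          by blast
      qed
    qed
  qed (use sets_first_edge_succeeds[OF finV finE] in simp)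
  finally show ?thesis .
qed

theorem theorem1:
  "\<forall>d::real > 0. \<exists>c::real > 0. \<forall>(V::nat set) (E::nat set set) (p::real) (l::real) (N::nat).
     simple_graph V E \<longrightarrow> V \<noteq> {} \<longrightarrow> 0 < p \<longrightarrow> p \<le> 1 \<longrightarrow> 0 < l \<longrightarrow>
     real N \<ge> c * real (card V) * real (max_degree V E) / p * ln (real (card V)) \<longrightarrow>
     measure (cascades_measure N V E p l)
        (first_edge_succeeds N V E \<inter> space (cascades_measure N V E p l))
       \<ge> 1 - 1 / real (card V) powr d"
proof (intro allI impI)
  fix d :: real assume "0 < d"
  then show "\<exists>c::real > 0. \<forall>(V::nat set) (E::nat set set) (p::real) (l::real) (N::nat).
     simple_graph V E \<longrightarrow> V \<noteq> {} \<longrightarrow> 0 < p \<longrightarrow> p \<le> 1 \<longrightarrow> 0 < l \<longrightarrow>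
     real N \<ge> c * real (card V) * real (max_degree V E) / p * ln (real (card V)) \<longrightarrow>
     measure (cascades_measure N V E p l)
        (first_edge_succeeds N V E \<inter> space (cascades_measure N V E p l))
       \<ge> 1 - 1 / real (card V) powr d"
    by (intro exI[of _ "6 * (d + 2)"]) (auto intro: first_edge_succeeds_probability_ge)
qed

end
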